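(* Let $R>0$, let $E\subset\mathbb{R}^d$ be a body, $a\in\partial\, co_R(E)$, and let $B=B(o,R)$ be an open ball of radius $R$ centered at the origin which $R$-supports $co_R(E)$ at $a$, i.e. $a\in\partial B$ and $B\cap co_R(E)=\emptyset$. Let $S=\partial B$, $\mathfrak F=E\cap S$, $F=\{\lambda x:\lambda\ge0,\ x\in\mathfrak F\}$ and $C=co(F)$. Assume that $C$ is pointed, i.e. $C\cap(-C)=\{o\}$, and that $a\notin C$. Then: (i) there exists $v\in S^{d-1}$ such that $\langle a,v\rangle>0$ and $\langle x,v\rangle<0$ for all $x\in\mathfrak F$; (ii) for this $v$, setting $B_t=\{x:|x-tv|<R\}$, for all sufficiently small $t>0$ one has $a\in B_t$ and $B_t\cap E=\emptyset$.
   Context: A body is a nonempty closed subset of $\mathbb{R}^d$; $o$ is the origin, $S^{d-1}$ the unit sphere, $co(\cdot)$ the convex hull. Fix $R>0$. The $R$-hulloid of a body $E$ is $co_R(E)=\bigcap\{\mathbb{R}^d\setminus B : B \text{ an open ball of radius } R,\ B\cap E=\emptyset\}$ (equal to $\mathbb{R}^d$ if no such ball exists). *)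

theory Defs
  imports "HOL-Analysis.Analysis"
begin

definition body :: "'a::euclidean_space set \<Rightarrow> bool" where
  "body E \<longleftrightarrow> E \<noteq> {} \<and> closed E"

text \<open>The R-hulloid: intersection of complements of all open balls of radius R
  disjoint from E (UNIV if there is none).\<close>
definition co_R :: "real \<Rightarrow> 'a::euclidean_space set \<Rightarrow> 'a set" where
  "co_R R E = \<Inter> {- ball c R | c. ball c R \<inter> E = {}}"

end

theory Submission
  imports Defs
begin

text \<open>Pointedness of \<open>C\<close> forces \<open>0 \<notin> convex hull FF\<close>, so the cone generated by the
  compact set \<open>convex hull FF\<close> is closed; it lies in \<open>C\<close>, hence a linear functional \<open>w\<close> separates
  \<open>a\<close> from it: \<open>a \<bullet> w > 0\<close> and \<open>x \<bullet> w \<le> 0\<close> on the cone. Subtracting a small multiple of a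
  functional that is positive on \<open>convex hull FF\<close> makes the inequalities on \<open>FF\<close> strict, which
  gives \<open>v\<close>.

  Shifting the centre to \<open>t v\<close> changes \<open>|a|\<^sup>2 = R\<^sup>2\<close> into \<open>R\<^sup>2 - 2 t (a \<bullet> v) + t\<^sup>2 < R\<^sup>2\<close> for small
  \<open>t > 0\<close>. Points \<open>x \<in> E\<close> with \<open>x \<bullet> v < 0\<close> only get farther from the centre, while the
  remaining points of \<open>E\<close> form a closed set disjoint from \<open>cball 0 R\<close>, hence at positive
  distance from it, and a shift by less than that distance cannot bring them into the ball.\<close>

lemma conic_convex_hull:
  assumes "conic S"
  shows "conic (convex hull S)"
  unfolding conic_def
proof (intro allI impI)
  fix x and c :: real
  assume x: "x \<in> convex hull S" and c: "0 \<le> c"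
  then have "c *\<^sub>R x \<in> (\<lambda>x. c *\<^sub>R x) ` (convex hull S)"
    by blast
  also have "\<dots> = convex hull ((\<lambda>x. c *\<^sub>R x) ` S)"
    by (simp add: convex_hull_scaling)
  also have "\<dots> \<subseteq> convex hull S"
    using assms c by (intro hull_mono) (auto intro: conic_mul)
  finally show "c *\<^sub>R x \<in> convex hull S" .
qed

lemma convex_cone_sum:
  assumes "convex_cone C" "\<And>i. i \<in> I \<Longrightarrow> f i \<in> C"
  shows "sum f I \<in> C"
  using assms(2)
proof (induction I rule: infinite_finite_induct)
  case (infinite I)
  then show ?case using assms(1) by (simp add: convex_cone_contains_0)
next
  case empty
  then show ?case using assms(1) by (simp add: convex_cone_contains_0)
next
  case (insert i I)
  then show ?case using assms(1) by (simp add: convex_cone_add)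
qed

lemma zero_notin_convex_hull_pointed_cone:
  assumes "convex C" "conic C" "C \<inter> uminus ` C = {0}" "S \<subseteq> C" "0 \<notin> S"
  shows "0 \<notin> convex hull S"
proof
  assume "0 \<in> convex hull S"
  then obtain T u where T: "finite T" "T \<subseteq> S" "\<forall>x\<in>T. 0 \<le> u x" "sum u T = 1"
    and sum0: "(\<Sum>x\<in>T. u x *\<^sub>R x) = 0"
    unfolding convex_hull_explicit by auto
  have "\<exists>x\<in>T. u x > 0"
  proof (rule ccontr)
    assume "\<not> (\<exists>x\<in>T. u x > 0)"
    then have "sum u T \<le> 0"
      by (intro sum_nonpos) (auto simp: not_less)
    with T(4) show False by simp
  qed
  then obtain x where x: "x \<in> T" "u x > 0" by blast
  have cone: "convex_cone C"
    using assms(1,2,4) x T(2) by (auto simp: convex_cone_def)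
  have term_mem: "u y *\<^sub>R y \<in> C" if "y \<in> T" for y
    using that T assms(4) by (intro convex_cone_scaleR[OF cone]) auto
  have "u x *\<^sub>R x = - (\<Sum>y\<in>T - {x}. u y *\<^sub>R y)"
    using sum0 T(1) x(1) by (simp add: sum.remove eq_neg_iff_add_eq_0)
  moreover have "(\<Sum>y\<in>T - {x}. u y *\<^sub>R y) \<in> C"
    using term_mem by (intro convex_cone_sum[OF cone]) auto
  ultimately have "u x *\<^sub>R x = 0"
    using term_mem[OF x(1)] assms(3) by blast
  then show False
    using x T(2) assms(5) by auto
qed

lemma closed_convex_cone_separation:
  fixes D :: "'a::euclidean_space set"
  assumes "convex D" "closed D" "conic D" "D \<noteq> {}" "a \<notin> D"
  obtains w where "a \<bullet> w > 0" "\<And>x. x \<in> D \<Longrightarrow> x \<bullet> w \<le> 0"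
proof -
  obtain w b where wa: "w \<bullet> a < b" and wD: "\<And>x. x \<in> D \<Longrightarrow> w \<bullet> x > b"
    using separating_hyperplane_closed_point[OF assms(1,2,5)] by auto
  have "b < 0"
    using wD[of 0] assms(3,4) by (simp add: conic_contains_0)
  have "x \<bullet> w \<ge> 0" if "x \<in> D" for x
  proof (rule ccontr)
    assume "\<not> x \<bullet> w \<ge> 0"
    then have "(b / (x \<bullet> w)) *\<^sub>R x \<in> D"
      using \<open>b < 0\<close> that assms(3) by (intro conic_mul) (auto simp: divide_nonpos_neg)
    then show False
      using wD \<open>\<not> x \<bullet> w \<ge> 0\<close> by (fastforce simp: inner_commute)
  qed
  then show ?thesis
    using that[of "- w"] wa \<open>b < 0\<close> by (auto simp: inner_commute)
qed

lemma perturb_to_strict_separation: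
  fixes a w u :: "'a::real_inner"
  assumes "a \<bullet> w > 0" "\<And>x. x \<in> S \<Longrightarrow> x \<bullet> w \<le> 0" "\<And>x. x \<in> S \<Longrightarrow> x \<bullet> u > 0"
  shows "\<exists>v. a \<bullet> v > 0 \<and> (\<forall>x\<in>S. x \<bullet> v < 0)"
proof (intro exI conjI ballI)
  define \<epsilon> where "\<epsilon> = (a \<bullet> w) / (1 + \<bar>a \<bullet> u\<bar>)"
  have "\<epsilon> > 0"
    using assms(1) by (simp add: \<epsilon>_def add_pos_nonneg)
  have "a \<bullet> (w - \<epsilon> *\<^sub>R u) \<ge> a \<bullet> w - \<epsilon> * \<bar>a \<bullet> u\<bar>"
    using \<open>\<epsilon> > 0\<close> by (simp add: inner_diff_right mult_left_mono)
  also have "a \<bullet> w - \<epsilon> * \<bar>a \<bullet> u\<bar> = \<epsilon>"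
    by (simp add: \<epsilon>_def field_simps add_pos_nonneg)
  finally show "a \<bullet> (w - \<epsilon> *\<^sub>R u) > 0"
    using \<open>\<epsilon> > 0\<close> by linarith
  fix x
  assume "x \<in> S"
  then have "\<epsilon> * (x \<bullet> u) > 0"
    using \<open>\<epsilon> > 0\<close> assms(3) by simp
  then show "x \<bullet> (w - \<epsilon> *\<^sub>R u) < 0"
    using assms(2)[OF \<open>x \<in> S\<close>] by (simp add: inner_diff_right)
qed

lemma unit_direction_separating_cone:
  fixes S :: "'a::euclidean_space set"
  assumes "compact S" "0 \<notin> convex hull S" "a \<notin> conic hull (convex hull S)" "a \<noteq> 0"
  obtains v where "norm v = 1" "a \<bullet> v > 0" "\<And>x. x \<in> S \<Longrightarrow> x \<bullet> v < 0"
proof -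
  have "\<exists>v. a \<bullet> v > 0 \<and> (\<forall>x\<in>S. x \<bullet> v < 0)"
  proof (cases "S = {}")
    case True
    then show ?thesis
      using assms(4) by (auto intro: exI[of _ a])
  next
    case False
    have "compact (convex hull S)"
      using assms(1) by (rule compact_convex_hull)
    obtain w where "a \<bullet> w > 0" and w: "\<And>x. x \<in> conic hull (convex hull S) \<Longrightarrow> x \<bullet> w \<le> 0"
    proof (rule closed_convex_cone_separation)
      show "closed (conic hull (convex hull S))"
        using \<open>compact (convex hull S)\<close> assms(2) by (intro closed_conic_hull_strong) auto
    qed (use False assms(3) in \<open>auto simp: convex_conic_hull conic_conic_hull conic_hull_eq_empty\<close>)
    obtain u c where "0 < c" and u: "\<And>x. x \<in> convex hull S \<Longrightarrow> u \<bullet> x > c"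
      using separating_hyperplane_closed_0[OF _ compact_imp_closed assms(2)]
        \<open>compact (convex hull S)\<close> by auto
    show ?thesis
    proof (rule perturb_to_strict_separation[OF \<open>a \<bullet> w > 0\<close>])
      fix x
      assume "x \<in> S"
      then show "x \<bullet> w \<le> 0"
        using w by (auto intro: hull_inc)
      show "x \<bullet> u > 0"
        using u[OF hull_inc[OF \<open>x \<in> S\<close>]] \<open>0 < c\<close> by (simp add: inner_commute)
    qed
  qed
  then obtain v where av: "a \<bullet> v > 0" and Sv: "\<forall>x\<in>S. x \<bullet> v < 0" by blast
  then have "v \<noteq> 0" by auto
  then show ?thesis
    using that[of "v /\<^sub>R norm v"] av Sv by (simp add: mult_pos_neg)
qed

lemma unit_direction_separating_pointed_cone:
  fixes S :: "'a::euclidean_space set"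
  assumes "compact S" "0 \<notin> S" "C = convex hull (conic hull S)" "C \<inter> uminus ` C = {0}"
    "a \<notin> C" "a \<noteq> 0"
  obtains v where "norm v = 1" "a \<bullet> v > 0" "\<And>x. x \<in> S \<Longrightarrow> x \<bullet> v < 0"
proof (rule unit_direction_separating_cone)
  have C: "convex C" "conic C" "S \<subseteq> C"
    using assms(3) hull_subset[of S conic] hull_subset[of "conic hull S" convex]
    by (auto simp: conic_convex_hull conic_conic_hull)
  then show "0 \<notin> convex hull S"
    using assms(2) by (intro zero_notin_convex_hull_pointed_cone[OF _ _ assms(4)])
  have "conic hull (convex hull S) \<subseteq> C"
    using C by (intro hull_minimal) auto
  then show "a \<notin> conic hull (convex hull S)"
    using assms(5) by blast
qed (use assms in auto)

lemma power2_norm_diff_scaleR: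
  fixes x v :: "'a::real_inner"
  shows "(norm (x - t *\<^sub>R v))\<^sup>2 = (norm x)\<^sup>2 - 2 * t * (x \<bullet> v) + t\<^sup>2 * (norm v)\<^sup>2"
  unfolding power2_norm_eq_inner
  by (simp add: inner_commute algebra_simps power2_eq_square)

lemma norm_le_norm_diff_scaleR:
  fixes x v :: "'a::real_inner"
  assumes "x \<bullet> v \<le> 0" "t \<ge> 0"
  shows "norm x \<le> norm (x - t *\<^sub>R v)"
proof (rule power2_le_imp_le)
  have "t * (x \<bullet> v) \<le> 0" "0 \<le> t\<^sup>2 * (norm v)\<^sup>2"
    using assms by (simp_all add: mult_nonneg_nonpos)
  then show "(norm x)\<^sup>2 \<le> (norm (x - t *\<^sub>R v))\<^sup>2"
    unfolding power2_norm_diff_scaleR by linarith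
qed simp

lemma eventually_mem_shifted_ball:
  fixes a v :: "'a::real_inner"
  assumes "norm a = R" "a \<bullet> v > 0"
  shows "\<forall>\<^sub>F t in at_right 0. a \<in> ball (t *\<^sub>R v) R"
  unfolding eventually_at_right_field
proof (intro exI[of _ "2 * (a \<bullet> v) / (norm v)\<^sup>2"] conjI allI impI)
  have "v \<noteq> 0"
    using assms(2) by auto
  then show "0 < 2 * (a \<bullet> v) / (norm v)\<^sup>2"
    using assms(2) by simp
  fix t :: real
  assume "0 < t" "t < 2 * (a \<bullet> v) / (norm v)\<^sup>2"
  then have "t * (t * (norm v)\<^sup>2 - 2 * (a \<bullet> v)) < 0"
    using \<open>v \<noteq> 0\<close> by (intro mult_pos_neg) (auto simp: pos_less_divide_eq)
  moreover have "(norm (a - t *\<^sub>R v))\<^sup>2 = R\<^sup>2 + t * (t * (norm v)\<^sup>2 - 2 * (a \<bullet> v))"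
    using power2_norm_diff_scaleR[of a t v] assms(1) by (simp add: algebra_simps power2_eq_square)
  ultimately have "(norm (a - t *\<^sub>R v))\<^sup>2 < R\<^sup>2"
    by linarith
  then show "a \<in> ball (t *\<^sub>R v) R"
    using assms(1) by (auto simp: dist_norm norm_minus_commute intro: power2_less_imp_less)
qed

lemma eventually_shifted_ball_disjoint:
  fixes E :: "'a::euclidean_space set"
  assumes "closed E" "ball 0 R \<inter> E = {}" "\<And>x. x \<in> E \<inter> sphere 0 R \<Longrightarrow> x \<bullet> v < 0"
  shows "\<forall>\<^sub>F t in at_right 0. ball (t *\<^sub>R v) R \<inter> E = {}"
proof -
  define E' where "E' = E \<inter> {x. x \<bullet> v \<ge> 0}"
  have norm_ge: "R \<le> norm x" if "x \<in> E" for x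
    using assms(2) that by (force simp: not_le)
  have "cball 0 R \<inter> E' = {}"
    using assms(3) norm_ge by (force simp: E'_def not_le)
  then obtain d where "d > 0" and d: "\<And>y x. y \<in> cball 0 R \<Longrightarrow> x \<in> E' \<Longrightarrow> d \<le> dist y x"
    using separate_compact_closed[of "cball 0 R" E'] assms(1)
    by (auto simp: E'_def closed_halfspace_component_ge closed_Int)
  have "((\<lambda>t. t *\<^sub>R v) \<longlongrightarrow> 0) (at_right 0)"
    by (auto intro!: tendsto_eq_intros)
  then have "\<forall>\<^sub>F t in at_right 0. norm (t *\<^sub>R v) < d"
    using \<open>d > 0\<close> by (auto simp: tendsto_iff)
  moreover have "\<forall>\<^sub>F t in at_right (0::real). 0 < t"
    by (rule eventually_at_right_less)
  ultimately show ?thesis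
  proof eventually_elim
    case (elim t)
    show "ball (t *\<^sub>R v) R \<inter> E = {}"
    proof (intro equals0I)
      fix x
      assume "x \<in> ball (t *\<^sub>R v) R \<inter> E"
      then have xt: "norm (x - t *\<^sub>R v) < R" and "x \<in> E"
        by (auto simp: dist_norm norm_minus_commute)
      show False
      proof (cases "x \<bullet> v < 0")
        case True
        then have "norm x \<le> norm (x - t *\<^sub>R v)"
          using elim by (intro norm_le_norm_diff_scaleR) auto
        then show False
          using xt norm_ge[OF \<open>x \<in> E\<close>] by linarith
      next
        case False
        then have "d \<le> dist (x - t *\<^sub>R v) x"
          using xt \<open>x \<in> E\<close> by (intro d) (auto simp: E'_def)
        then show False
          using elim by (simp add: dist_norm)
      qed
    qed
  qed
qed

theorem mainTheorem3:
  fixes E :: "'a::euclidean_space set" and R :: real and a :: 'a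
  assumes "R > 0"
    and "body E"
    and "a \<in> frontier (co_R R E)"
    and "a \<in> sphere 0 R"
    and "ball 0 R \<inter> co_R R E = {}"
    and "FF = E \<inter> sphere 0 R"
    and "F = {l *\<^sub>R x | l x. l \<ge> 0 \<and> x \<in> FF}"
    and "C = convex hull F"
    and "C \<inter> uminus ` C = {0}"
    and "a \<notin> C"
  shows "(\<exists>v. norm v = 1 \<and> a \<bullet> v > 0 \<and> (\<forall>x\<in>FF. x \<bullet> v < 0))
       \<and> (\<forall>v. norm v = 1 \<and> a \<bullet> v > 0 \<and> (\<forall>x\<in>FF. x \<bullet> v < 0) \<longrightarrow>
            (\<forall>\<^sub>F t in at_right 0. a \<in> ball (t *\<^sub>R v) R \<and> ball (t *\<^sub>R v) R \<inter> E = {}))"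
proof
  have "closed E" "ball 0 R \<inter> E = {}"
    using assms(2,5) by (auto simp: body_def co_R_def)
  have "compact FF" "0 \<notin> FF" "a \<noteq> 0"
    using \<open>closed E\<close> assms(1,4,6) by (auto simp: closed_Int_compact)
  moreover have "C = convex hull (conic hull FF)"
    using assms(7,8) by (simp add: conic_hull_explicit)
  ultimately obtain v where "norm v = 1" "a \<bullet> v > 0" "\<And>x. x \<in> FF \<Longrightarrow> x \<bullet> v < 0"
    using unit_direction_separating_pointed_cone assms(9,10) by metis
  then show "\<exists>v. norm v = 1 \<and> a \<bullet> v > 0 \<and> (\<forall>x\<in>FF. x \<bullet> v < 0)"
    by blast
  show "\<forall>v. norm v = 1 \<and> a \<bullet> v > 0 \<and> (\<forall>x\<in>FF. x \<bullet> v < 0) \<longrightarrow>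
          (\<forall>\<^sub>F t in at_right 0. a \<in> ball (t *\<^sub>R v) R \<and> ball (t *\<^sub>R v) R \<inter> E = {})"
  proof (intro allI impI eventually_conj)
    fix v :: 'a
    assume v: "norm v = 1 \<and> a \<bullet> v > 0 \<and> (\<forall>x\<in>FF. x \<bullet> v < 0)"
    show "\<forall>\<^sub>F t in at_right 0. a \<in> ball (t *\<^sub>R v) R"
      using assms(4) v by (intro eventually_mem_shifted_ball) auto
    show "\<forall>\<^sub>F t in at_right 0. ball (t *\<^sub>R v) R \<inter> E = {}"
      using \<open>closed E\<close> \<open>ball 0 R \<inter> E = {}\<close> assms(6) v by (intro eventually_shifted_ball_disjoint) auto
  qed
qed

end
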